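(* Let $n,c\ge 1$ and let $\mathcal A$ be a deterministic automaton over $\Sigma_n^c$ whose acceptance of a run depends only on the set of transitions occurring infinitely often (e.g. a deterministic Rabin, Streett or parity automaton), and assume $\mathcal A$ recognises $L(\mathcal P_n^c)$ or its complement. If words $u,v\in(\Sigma_n^c)^*$ both lead from the initial state $s_0$ of $\mathcal A$ to the same state $s$, then $\mathrm{reach}(u)=\mathrm{reach}(v)$, or $\top\in\mathrm{reach}(u)$ and $\top\in\mathrm{reach}(v)$.
   Context: Full parity automaton $\mathcal P_n^c$: state set $Q$ with $|Q|=n$, plus a special accepting sink $\top\notin Q$ (all transitions from $\top$ lead to $\top$, and any run visiting $\top$ is accepting); $Q^\top=Q\cup\{\top\}$. Alphabet $\Sigma_n^c$ is the set of functions $\sigma:Q\times Q^\top\to 2^{\{1,\dots,c\}}$. Initial states $I=Q$; transitions $(q,\sigma,q')$ with $q\in Q$, $q'\in Q^\top$ and $\sigma(q,q')\neq\emptyset$; the priority of $(q,\sigma,q')$ with $q'\in Q$ is the largest even number in $\sigma(q,q')$ if there is one, and otherwise the smallest (odd) number in $\sigma(q,q')$. A run not visiting $\top$ is accepting iff the largest priority occurring infinitely often is even; a word is accepted iff some run accepts it. $\mathrm{reach}(u)\subseteq Q^\top$ is defined by $\mathrm{reach}(\varepsilon)=Q$ and $\mathrm{reach}(w\sigma)=\{q'\in Q^\top\mid\exists q\in\mathrm{reach}(w).\ (q,\sigma,q')\text{ is a transition}\}$ (with $\top$ always having successor $\top$). *)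

theory Defs
  imports Main
begin

text \<open>States of the full parity automaton: Q = {0..<n} (nat); Q^top is encoded as
  nat option, with Some q for q in Q and None for the accepting sink top.\<close>

type_synonym letter = "nat \<Rightarrow> nat option \<Rightarrow> nat set"

definition Qtop :: "nat \<Rightarrow> nat option set" where
  "Qtop n = insert None (Some ` {..<n})"

definition Sigma :: "nat \<Rightarrow> nat \<Rightarrow> letter set" where
  "Sigma n c = {\<sigma>. (\<forall>q q'. \<sigma> q q' \<subseteq> {1..c}) \<and>
                    (\<forall>q q'. \<not> (q < n \<and> q' \<in> Qtop n) \<longrightarrow> \<sigma> q q' = {})}"

definition ptrans :: "nat \<Rightarrow> nat option \<Rightarrow> letter \<Rightarrow> nat option \<Rightarrow> bool" where
  "ptrans n x \<sigma> y = (case x of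
      None \<Rightarrow> y = None
    | Some q \<Rightarrow> q < n \<and> y \<in> Qtop n \<and> \<sigma> q y \<noteq> {})"

definition prio :: "letter \<Rightarrow> nat \<Rightarrow> nat \<Rightarrow> nat" where
  "prio \<sigma> q q' = (let S = \<sigma> q (Some q') in
      if (\<exists>p\<in>S. even p) then Max {p\<in>S. even p} else Min S)"

definition is_prun :: "nat \<Rightarrow> (nat \<Rightarrow> letter) \<Rightarrow> (nat \<Rightarrow> nat option) \<Rightarrow> bool" where
  "is_prun n w r = (r 0 \<in> Some ` {..<n} \<and> (\<forall>i. ptrans n (r i) (w i) (r (Suc i))))"

definition prun_accepting :: "(nat \<Rightarrow> letter) \<Rightarrow> (nat \<Rightarrow> nat option) \<Rightarrow> bool" where
  "prun_accepting w r = ((\<exists>i. r i = None) \<or>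
     (\<exists>p. even p \<and> (\<exists>\<^sub>\<infinity>i. prio (w i) (the (r i)) (the (r (Suc i))) = p) \<and>
          (\<forall>p'>p. \<not> (\<exists>\<^sub>\<infinity>i. prio (w i) (the (r i)) (the (r (Suc i))) = p'))))"

definition omega_words :: "'a set \<Rightarrow> (nat \<Rightarrow> 'a) set" where
  "omega_words A = {w. \<forall>i. w i \<in> A}"

definition LP :: "nat \<Rightarrow> nat \<Rightarrow> (nat \<Rightarrow> letter) set" where
  "LP n c = {w \<in> omega_words (Sigma n c). \<exists>r. is_prun n w r \<and> prun_accepting w r}"

definition reach_step :: "nat \<Rightarrow> nat option set \<Rightarrow> letter \<Rightarrow> nat option set" where
  "reach_step n R \<sigma> = {y. \<exists>x\<in>R. ptrans n x \<sigma> y}"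

definition reach :: "nat \<Rightarrow> letter list \<Rightarrow> nat option set" where
  "reach n u = foldl (reach_step n) (Some ` {..<n}) u"

text \<open>Deterministic automaton (state type 's, initial state s0, transition function delta)
  whose acceptance depends only on the set of transitions occurring infinitely often,
  given by a predicate Acc on sets of transitions.\<close>
definition drun :: "('s \<Rightarrow> 'a \<Rightarrow> 's) \<Rightarrow> 's \<Rightarrow> (nat \<Rightarrow> 'a) \<Rightarrow> nat \<Rightarrow> 's" where
  "drun \<delta> s0 w i = foldl \<delta> s0 (map w [0..<i])"

definition inf_trans :: "('s \<Rightarrow> 'a \<Rightarrow> 's) \<Rightarrow> 's \<Rightarrow> (nat \<Rightarrow> 'a) \<Rightarrow> ('s \<times> 'a \<times> 's) set" where
  "inf_trans \<delta> s0 w = {t. \<exists>\<^sub>\<infinity>i. (drun \<delta> s0 w i, w i, drun \<delta> s0 w (Suc i)) = t}"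

definition dlang :: "'a set \<Rightarrow> ('s \<Rightarrow> 'a \<Rightarrow> 's) \<Rightarrow> 's \<Rightarrow> (('s \<times> 'a \<times> 's) set \<Rightarrow> bool)
    \<Rightarrow> (nat \<Rightarrow> 'a) set" where
  "dlang A \<delta> s0 Acc = {w \<in> omega_words A. Acc (inf_trans \<delta> s0 w)}"

end

theory Submission
  imports Defs
begin

text \<open>Suppose some \<open>x \<in> reach u\<close> is missing from \<open>reach v\<close> and \<open>\<top> \<notin> reach v\<close>. Let \<open>\<sigma>\<^sub>x\<close> be
  the letter whose only transition leads from \<open>x\<close> to \<open>\<top>\<close>. Then \<open>u \<sigma>\<^sub>x\<^sup>\<omega>\<close> is accepted by
  \<open>\<P>\<^sub>n\<^sup>c\<close>, since a run reaching \<open>x\<close> after \<open>u\<close> moves to \<open>\<top>\<close>, whereas every run on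
  \<open>v \<sigma>\<^sub>x\<^sup>\<omega>\<close> gets stuck after \<open>v\<close>. But the deterministic automaton, being in the same
  state after \<open>u\<close> and \<open>v\<close>, sees the same transitions infinitely often on both words and so
  cannot separate them.\<close>

lemma INFM_nat_shift: "(\<exists>\<^sub>\<infinity>i::nat. P (i + k)) \<longleftrightarrow> (\<exists>\<^sub>\<infinity>i. P i)"
  unfolding cofinite_eq_sequentially frequently_def
  using eventually_sequentially_seg[of "\<lambda>i. \<not> P i" k] by simp

lemma drun_add:
  "drun \<delta> s0 w (i + k) = drun \<delta> (drun \<delta> s0 w k) (\<lambda>j. w (j + k)) i"
proof -
  have "[0..<i + k] = [0..<k] @ map (\<lambda>j. j + k) [0..<i]"
    using upt_add_eq_append[of 0 k i] by (simp add: map_add_upt add.commute)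
  then show ?thesis by (simp add: drun_def comp_def)
qed

lemma inf_trans_suffix:
  "inf_trans \<delta> s0 w = inf_trans \<delta> (drun \<delta> s0 w k) (\<lambda>j. w (j + k))"
  unfolding inf_trans_def
  using INFM_nat_shift[of "\<lambda>i. (drun \<delta> s0 w i, w i, drun \<delta> s0 w (Suc i)) = _" k]
  by (simp add: drun_add[of \<delta> s0 w _ k, symmetric])

definition append_repeat :: "'a list \<Rightarrow> 'a \<Rightarrow> nat \<Rightarrow> 'a" where
  "append_repeat u s = (\<lambda>i. if i < length u then u ! i else s)"

lemma append_repeat_in_omega_words:
  "set u \<subseteq> A \<Longrightarrow> s \<in> A \<Longrightarrow> append_repeat u s \<in> omega_words A"
  by (auto simp: omega_words_def append_repeat_def)

lemma drun_append_repeat_length: "drun \<delta> s0 (append_repeat u s) (length u) = foldl \<delta> s0 u"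
proof -
  have "map (append_repeat u s) [0..<length u] = map ((!) u) [0..<length u]"
    by (simp add: append_repeat_def)
  then show ?thesis by (simp add: drun_def map_nth)
qed

lemma inf_trans_append_repeat:
  "inf_trans \<delta> s0 (append_repeat u s) = inf_trans \<delta> (foldl \<delta> s0 u) (\<lambda>_. s)"
proof -
  have "(\<lambda>j. append_repeat u s (j + length u)) = (\<lambda>_. s)"
    by (simp add: append_repeat_def)
  then show ?thesis
    using inf_trans_suffix[of \<delta> s0 "append_repeat u s" "length u"]
    by (simp add: drun_append_repeat_length)
qed

lemma dlang_append_repeat_iff:
  assumes "foldl \<delta> s0 u = foldl \<delta> s0 v" "set u \<subseteq> A" "set v \<subseteq> A" "s \<in> A"
  shows "append_repeat u s \<in> dlang A \<delta> s0 Acc \<longleftrightarrow> append_repeat v s \<in> dlang A \<delta> s0 Acc"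
  using assms by (simp add: dlang_def inf_trans_append_repeat append_repeat_in_omega_words)

lemma reach_snoc: "reach n (u @ [a]) = reach_step n (reach n u) a"
  by (simp add: reach_def)

lemma reach_subset_Qtop: "reach n u \<subseteq> Qtop n"
proof (induction u rule: rev_induct)
  case Nil then show ?case by (auto simp: reach_def Qtop_def)
next
  case (snoc a u) then show ?case
    by (auto simp: reach_snoc reach_step_def ptrans_def Qtop_def split: option.splits)
qed

lemma run_end_in_reach:
  assumes "r 0 \<in> Some ` {..<n}" "\<And>i. i < length u \<Longrightarrow> ptrans n (r i) (u ! i) (r (Suc i))"
  shows "r (length u) \<in> reach n u"
proof -
  have "r k \<in> reach n (take k u)" if "k \<le> length u" for k
    using that
  proof (induction k)
    case 0 then show ?case using assms(1) by (simp add: reach_def)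
  next
    case (Suc k)
    then show ?case using assms(2)[of k]
      by (auto simp: take_Suc_conv_app_nth reach_snoc reach_step_def)
  qed
  then show ?thesis by (metis order_refl take_all)
qed

lemma reach_has_run:
  assumes "y \<in> reach n u"
  obtains r where "r 0 \<in> Some ` {..<n}"
    "\<And>i. i < length u \<Longrightarrow> ptrans n (r i) (u ! i) (r (Suc i))" "r (length u) = y"
proof -
  have "\<exists>r. r 0 \<in> Some ` {..<n} \<and> (\<forall>i<length u. ptrans n (r i) (u ! i) (r (Suc i)))
            \<and> r (length u) = y"
    using assms
  proof (induction u arbitrary: y rule: rev_induct)
    case Nil then show ?case by (auto simp: reach_def)
  next
    case (snoc a u)
    then obtain x where x: "x \<in> reach n u" "ptrans n x a y"
      by (auto simp: reach_snoc reach_step_def)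
    from snoc.IH[OF x(1)] obtain r where r: "r 0 \<in> Some ` {..<n}"
      "\<forall>i<length u. ptrans n (r i) (u ! i) (r (Suc i))" "r (length u) = x" by blast
    have "\<forall>i<length (u @ [a]).
            ptrans n ((r(Suc (length u) := y)) i) ((u @ [a]) ! i) ((r(Suc (length u) := y)) (Suc i))"
      using r x by (auto simp: nth_append less_Suc_eq)
    with r(1) show ?case by (intro exI[of _ "r(Suc (length u) := y)"]) simp
  qed
  then show ?thesis using that by blast
qed

definition to_top_letter :: "nat option \<Rightarrow> letter" where
  "to_top_letter x = (\<lambda>q y. if Some q = x \<and> y = None then {1} else {})"

text \<open>For \<open>x = \<top>\<close> this is the empty letter, which only the self-loop on \<open>\<top>\<close> can read.\<close>

lemma to_top_letter_in_Sigma: "x \<in> Qtop n \<Longrightarrow> c \<ge> 1 \<Longrightarrow> to_top_letter x \<in> Sigma n c"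
  by (auto simp: Sigma_def to_top_letter_def Qtop_def)

lemma ptrans_to_top_letter:
  "ptrans n y (to_top_letter x) z \<longleftrightarrow> z = None \<and> (y = None \<or> y = x \<and> x \<in> Qtop n)"
  by (cases y) (auto simp: ptrans_def to_top_letter_def Qtop_def)

lemma append_repeat_to_top_in_LP:
  assumes "x \<in> reach n u" "set u \<subseteq> Sigma n c" "c \<ge> 1"
  shows "append_repeat u (to_top_letter x) \<in> LP n c"
proof -
  have xQ: "x \<in> Qtop n" using assms(1) reach_subset_Qtop by blast
  obtain r where r: "r 0 \<in> Some ` {..<n}"
    "\<And>i. i < length u \<Longrightarrow> ptrans n (r i) (u ! i) (r (Suc i))" "r (length u) = x" using reach_has_run[OF assms(1)] by blast
  define r' where "r' i = (if i \<le> length u then r i else None)" for i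
  have "ptrans n (r' i) (append_repeat u (to_top_letter x) i) (r' (Suc i))" for i
    using r xQ
    by (cases "i < length u") (auto simp: r'_def append_repeat_def ptrans_to_top_letter)
  then have "is_prun n (append_repeat u (to_top_letter x)) r'"
    using r(1) by (simp add: is_prun_def r'_def)
  moreover have "prun_accepting (append_repeat u (to_top_letter x)) r'"
    by (auto simp: prun_accepting_def r'_def intro: exI[of _ "Suc (length u)"])
  moreover have "append_repeat u (to_top_letter x) \<in> omega_words (Sigma n c)"
    using assms(2,3) xQ by (simp add: append_repeat_in_omega_words to_top_letter_in_Sigma)
  ultimately show ?thesis by (auto simp: LP_def)
qed

lemma append_repeat_to_top_notin_LP:
  assumes "x \<notin> reach n v" "None \<notin> reach n v"
  shows "append_repeat v (to_top_letter x) \<notin> LP n c"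
proof
  assume "append_repeat v (to_top_letter x) \<in> LP n c"
  then obtain r where r0: "r 0 \<in> Some ` {..<n}"
    and rs: "\<And>i. ptrans n (r i) (append_repeat v (to_top_letter x) i) (r (Suc i))"
    by (auto simp: LP_def is_prun_def)
  have "r (length v) \<in> reach n v"
    using rs by (intro run_end_in_reach[of r n v, OF r0]) (metis append_repeat_def)
  moreover have "ptrans n (r (length v)) (to_top_letter x) (r (Suc (length v)))"
    using rs[of "length v"] by (simp add: append_repeat_def)
  ultimately show False
    using assms by (auto simp: ptrans_to_top_letter)
qed

lemma reach_subset_or_top:
  assumes "c \<ge> 1"
    and "dlang (Sigma n c) \<delta> s0 Acc = LP n c \<or>
         dlang (Sigma n c) \<delta> s0 Acc = omega_words (Sigma n c) - LP n c"
    and "set u \<subseteq> Sigma n c" "set v \<subseteq> Sigma n c"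
    and "foldl \<delta> s0 u = foldl \<delta> s0 v"
  shows "reach n u \<subseteq> reach n v \<or> None \<in> reach n v"
proof (rule ccontr)
  assume "\<not> ?thesis"
  then obtain x where x: "x \<in> reach n u" "x \<notin> reach n v" and top: "None \<notin> reach n v" by blast
  let ?s = "to_top_letter x"
  have "?s \<in> Sigma n c" using x(1) reach_subset_Qtop assms(1) by (blast intro: to_top_letter_in_Sigma)
  then have "append_repeat u ?s \<in> dlang (Sigma n c) \<delta> s0 Acc \<longleftrightarrow>
             append_repeat v ?s \<in> dlang (Sigma n c) \<delta> s0 Acc"
    using assms(3-5) by (intro dlang_append_repeat_iff)
  moreover have "append_repeat u ?s \<in> LP n c" "append_repeat v ?s \<notin> LP n c"
    using append_repeat_to_top_in_LP[OF x(1) assms(3,1)] append_repeat_to_top_notin_LP[OF x(2) top]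
    by auto
  ultimately show False
    using assms(2-4) \<open>?s \<in> Sigma n c\<close> by (auto simp: append_repeat_in_omega_words)
qed

theorem mainTheorem6:
  fixes n c :: nat
    and \<delta> :: "'s::finite \<Rightarrow> letter \<Rightarrow> 's" and s0 :: 's
    and Acc :: "('s \<times> letter \<times> 's) set \<Rightarrow> bool"
    and u v :: "letter list"
  assumes "n \<ge> 1" and "c \<ge> 1"
    and "dlang (Sigma n c) \<delta> s0 Acc = LP n c \<or>
         dlang (Sigma n c) \<delta> s0 Acc = omega_words (Sigma n c) - LP n c"
    and "set u \<subseteq> Sigma n c" and "set v \<subseteq> Sigma n c"
    and "foldl \<delta> s0 u = foldl \<delta> s0 v"
  shows "reach n u = reach n v \<or> (None \<in> reach n u \<and> None \<in> reach n v)"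
proof -
  have "reach n u \<subseteq> reach n v \<or> None \<in> reach n v"
    using reach_subset_or_top[OF assms(2-6)] .
  moreover have "reach n v \<subseteq> reach n u \<or> None \<in> reach n u"
    using reach_subset_or_top[OF assms(2,3,5,4) assms(6)[symmetric]] .
  ultimately show ?thesis by blast
qed

end
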